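(* In the setting below, for $v\in T_PM$ let $E|_v=\{x(v):x\in\Delta\}$, where $\Delta=\{x\in\mathbb{R}[T_PM,T_PM]: A(v)x(v)=0\text{ for all }v\}$. Then $E|_v=E|_{-v}$ for all $v\in T_PM\setminus\{0\}$.
   Context: $M$ is a locally isotropic pseudo-Riemannian manifold of signature $(p,q)$, $q>p\ge2$, $P\in M$, $n\ge1$, and $S:T_PM\to\mathrm{Hom}(T_PM,T_PM)$, $S\not\equiv0$, satisfies: each $S(v)$ self-adjoint; $S(v)v=0$; $S(-v)=-S(v)$; $S(Tv)=T\circ S(v)\circ T^{-1}$ for differentials $T$ of local isometries fixing $P$; and $S$ is a homogeneous polynomial of degree $2n+1$ in the coordinates of $v$. The spectrum of $S(v)$ for unit timelike $v$ is $\{0,\pm\lambda_1,\dots,\pm\lambda_l\}$, $\lambda_i>0$, $l\ge1$; $\sigma_k(\lambda)$ is the $k$-th elementary symmetric function of $\lambda_1^2,\dots,\lambda_l^2$; $A(v)=S(v)^{2l}+\sum_{k=1}^l\sigma_k(\lambda)(v,v)^{(2n+1)k}S(v)^{2l-2k}$. $\mathbb{R}[T_PM,T_PM]$ denotes polynomial maps $T_PM\to T_PM$. *)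

theory Defs
  imports "HOL-Analysis.Analysis"
begin

text \<open>T_P M is modelled as real^'n in coordinates w.r.t. a g-orthonormal basis;
  the index set Neg collects the basis vectors e with g(e,e) = -1.\<close>

definition metric :: "'n::finite set \<Rightarrow> real^'n \<Rightarrow> real^'n \<Rightarrow> real" where
  "metric Neg v w = (\<Sum>i\<in>UNIV. (if i \<in> Neg then -1 else 1) * v$i * w$i)"

inductive poly_fun :: "(real^'n \<Rightarrow> real) \<Rightarrow> bool" where
  const: "poly_fun (\<lambda>v. c)"
| coord: "poly_fun (\<lambda>v. v $ i)"
| add: "poly_fun f \<Longrightarrow> poly_fun g \<Longrightarrow> poly_fun (\<lambda>v. f v + g v)"
| mult: "poly_fun f \<Longrightarrow> poly_fun g \<Longrightarrow> poly_fun (\<lambda>v. f v * g v)"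

definition poly_map :: "(real^'n \<Rightarrow> real^'n) \<Rightarrow> bool" where
  "poly_map x \<longleftrightarrow> (\<forall>i. poly_fun (\<lambda>v. x v $ i))"

definition matpow :: "real^'n^'n \<Rightarrow> nat \<Rightarrow> real^'n^'n" where
  "matpow M k = ((\<lambda>N. M ** N) ^^ k) (mat 1)"

definition spectrum_mat :: "real^'n^'n \<Rightarrow> complex set" where
  "spectrum_mat M = {\<mu>. det ((\<chi> i j. complex_of_real (M$i$j)) - mat \<mu>) = 0}"

definition elem_sym :: "nat \<Rightarrow> (nat \<Rightarrow> real) \<Rightarrow> nat \<Rightarrow> real" where
  "elem_sym l lam k = (\<Sum>I\<in>{I. I \<subseteq> {..<l} \<and> card I = k}. \<Prod>i\<in>I. (lam i)^2)"

definition A_op :: "'n::finite set \<Rightarrow> nat \<Rightarrow> nat \<Rightarrow> (nat \<Rightarrow> real) \<Rightarrow> (real^'n \<Rightarrow> real^'n^'n)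
    \<Rightarrow> real^'n \<Rightarrow> real^'n^'n" where
  "A_op Neg n l lam S v = matpow (S v) (2*l) +
     (\<Sum>k\<in>{1..l}. (elem_sym l lam k * metric Neg v v ^ ((2*n+1)*k)) *\<^sub>R matpow (S v) (2*l - 2*k))"

definition Delta :: "'n::finite set \<Rightarrow> nat \<Rightarrow> nat \<Rightarrow> (nat \<Rightarrow> real) \<Rightarrow> (real^'n \<Rightarrow> real^'n^'n)
    \<Rightarrow> (real^'n \<Rightarrow> real^'n) set" where
  "Delta Neg n l lam S = {x. poly_map x \<and> (\<forall>v. A_op Neg n l lam S v *v x v = 0)}"

definition E_at :: "'n::finite set \<Rightarrow> nat \<Rightarrow> nat \<Rightarrow> (nat \<Rightarrow> real) \<Rightarrow> (real^'n \<Rightarrow> real^'n^'n)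
    \<Rightarrow> real^'n \<Rightarrow> (real^'n) set" where
  "E_at Neg n l lam S v = (\<lambda>x. x v) ` Delta Neg n l lam S"

end

theory Submission
  imports Defs
begin

text \<open>Since S is odd, every even power of S(-v) equals that of S(v), and (-v,-v) = (v,v); hence
  A(-v) = A(v). So the defining condition of \<Delta> is invariant under x \<mapsto> x \<circ> uminus, which also
  preserves polynomiality, and evaluating at -v resp. v gives E|_v = E|_{-v}.\<close>

lemma poly_fun_compose:
  assumes "poly_fun f" and "poly_map y"
  shows "poly_fun (\<lambda>v. f (y v))"
  using assms(1)
proof (induction rule: poly_fun.induct)
  case (const c)
  show ?case by (rule poly_fun.const)
next
  case (coord i)
  show ?case using assms(2) by (simp add: poly_map_def)
next
  case (add f g)
  show ?case by (rule poly_fun.add[OF add.IH])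
next
  case (mult f g)
  show ?case by (rule poly_fun.mult[OF mult.IH])
qed

lemma poly_map_compose:
  assumes "poly_map x" and "poly_map y"
  shows "poly_map (x \<circ> y)"
  unfolding poly_map_def comp_def
proof
  fix i
  show "poly_fun (\<lambda>v. x (y v) $ i)"
    using poly_fun_compose[of "\<lambda>v. x v $ i" y] assms by (simp add: poly_map_def)
qed

lemma poly_map_uminus: "poly_map (uminus :: real^'n \<Rightarrow> real^'n)"
proof -
  have "poly_fun (\<lambda>v::real^'n. (-1) * v $ i)" for i
    by (rule poly_fun.mult[OF poly_fun.const poly_fun.coord])
  then show ?thesis by (simp add: poly_map_def)
qed

lemma matpow_scaleR: "matpow (c *\<^sub>R M) k = (c ^ k) *\<^sub>R matpow M k"
proof (induction k)
  case 0
  show ?case by (simp add: matpow_def)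
next
  case (Suc k)
  have "matpow (c *\<^sub>R M) (Suc k) = (c *\<^sub>R M) ** matpow (c *\<^sub>R M) k"
    by (simp add: matpow_def)
  also have "\<dots> = (c ^ Suc k) *\<^sub>R (M ** matpow M k)"
    by (simp add: Suc matrix_scalar_ac scalar_matrix_assoc[symmetric])
  also have "M ** matpow M k = matpow M (Suc k)"
    by (simp add: matpow_def)
  finally show ?case .
qed

lemma matpow_uminus_even: "matpow (- M) (2 * k) = matpow M (2 * k)"
  using matpow_scaleR[of "-1" M "2 * k"] by simp

lemma metric_uminus: "metric Neg (- v) (- w) = metric Neg v w"
  by (simp add: metric_def)

lemma A_op_uminus:
  assumes "S (- v) = - S v"
  shows "A_op Neg n l lam S (- v) = A_op Neg n l lam S v"
proof -
  have "matpow (S (- v)) (2 * j) = matpow (S v) (2 * j)" for j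
    by (simp add: assms matpow_uminus_even)
  moreover have "2 * l - 2 * k = 2 * (l - k)" for k
    by simp
  ultimately show ?thesis
    by (simp add: A_op_def metric_uminus)
qed

lemma Delta_compose_uminus:
  assumes "\<forall>v. S (- v) = - S v" and "x \<in> Delta Neg n l lam S"
  shows "x \<circ> uminus \<in> Delta Neg n l lam S"
proof -
  have "A_op Neg n l lam S v *v x (- v) = 0" for v
  proof -
    have "A_op Neg n l lam S v = A_op Neg n l lam S (- v)"
      using assms(1) A_op_uminus[of S "- v"] by simp
    then show ?thesis
      using assms(2) by (simp add: Delta_def)
  qed
  moreover have "poly_map (x \<circ> uminus)"
    using assms(2) by (intro poly_map_compose poly_map_uminus) (simp add: Delta_def)
  ultimately show ?thesis
    by (simp add: Delta_def)
qed

lemma E_at_uminus: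
  assumes "\<forall>v. S (- v) = - S v"
  shows "E_at Neg n l lam S (- v) = E_at Neg n l lam S v"
proof -
  have "E_at Neg n l lam S (- w) \<subseteq> E_at Neg n l lam S w" for w
  proof
    fix y assume "y \<in> E_at Neg n l lam S (- w)"
    then obtain x where "x \<in> Delta Neg n l lam S" and "y = (x \<circ> uminus) w"
      by (auto simp: E_at_def)
    with Delta_compose_uminus[OF assms] show "y \<in> E_at Neg n l lam S w"
      unfolding E_at_def by blast
  qed
  from this[of v] this[of "- v"] show ?thesis
    by auto
qed

theorem lemma5p6:
  fixes Neg :: "'n::finite set" and p q n l :: nat and lam :: "nat \<Rightarrow> real"
    and S :: "real^'n \<Rightarrow> real^'n^'n" and G :: "(real^'n^'n) set"
  assumes sig: "card Neg = p" "CARD('n) = p + q" "2 \<le> p" "p < q"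
    and G_isom: "\<forall>T\<in>G. invertible T \<and> (\<forall>v w. metric Neg (T *v v) (T *v w) = metric Neg v w)"
    and loc_isotropic: "\<forall>v w. metric Neg v v = metric Neg w w \<and> metric Neg v v \<noteq> 0
                           \<longrightarrow> (\<exists>T\<in>G. T *v v = w)"
    and n: "1 \<le> n"
    and S_nonzero: "\<exists>v. S v \<noteq> 0"
    and S_selfadj: "\<forall>v x y. metric Neg (S v *v x) y = metric Neg x (S v *v y)"
    and S_kills: "\<forall>v. S v *v v = 0"
    and S_odd: "\<forall>v. S (- v) = - S v"
    and S_equiv: "\<forall>T\<in>G. \<forall>v. S (T *v v) = T ** S v ** matrix_inv T"
    and S_poly: "\<forall>i j. poly_fun (\<lambda>v. S v $ i $ j)"
    and S_homog: "\<forall>t v. S (t *\<^sub>R v) = (t ^ (2*n+1)) *\<^sub>R S v"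
    and l: "1 \<le> l" and lam_pos: "\<forall>i<l. 0 < lam i" and lam_inj: "inj_on lam {..<l}"
    and spec: "\<forall>v. metric Neg v v = -1 \<longrightarrow>
       spectrum_mat (S v) = {0} \<union> (\<lambda>i. complex_of_real (lam i)) ` {..<l}
                                \<union> (\<lambda>i. - complex_of_real (lam i)) ` {..<l}"
  shows "\<forall>v. v \<noteq> 0 \<longrightarrow> E_at Neg n l lam S v = E_at Neg n l lam S (- v)"
  using E_at_uminus[OF S_odd] by simp

end
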